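(* Let $\hat B$ be the bus susceptance matrix of a connected power network (the post-attack network) with bus set $\mathcal N$. Let $P^g, P^d \in \mathbb R^{\mathcal N}$ be vectors of active generation and load, and let $\theta \in \mathbb R^{\mathcal N}$ satisfy $\hat B\theta = P^g - P^d$. Let $s \neq t$ be two generator buses, let $\Gamma > 0$, and define $\delta \in \mathbb R^{\mathcal N}$ by $\delta_s = \Gamma$, $\delta_t = -\Gamma$, $\delta_k = 0$ for all $k \neq s,t$. Put $\hat P^g = P^g + \delta$ and let $\hat\theta$ satisfy $\hat B \hat\theta = \hat P^g - P^d$. Let $k \neq t$ be a bus such that the network contains a path between $s$ and $k$ that does not include $t$. Then $$\hat\theta_k - \hat\theta_t \;>\; \theta_k - \theta_t .$$
   Context: DC power flow model. The network is an undirected connected graph on the bus set $\mathcal N$; each line $km$ has reactance $x_{km} > 0$. The bus susceptance matrix $\hat B$ is defined by $\hat B_{kk} = \sum_{km \ni k} 1/x_{km}$ (sum over lines incident to $k$), $\hat B_{km} = -1/x_{km}$ if $km$ is a line, and $\hat B_{km} = 0$ otherwise. A path between $s$ and $k$ "includes $t$" if $t$ is one of its vertices. *)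

theory Defs
  imports "HOL-Analysis.Analysis"
begin

(* A power network: finite bus set N, set of lines L (each line an unordered pair {k,m}
   of distinct buses of N), reactances x on lines. *)

definition network :: "'a set \<Rightarrow> 'a set set \<Rightarrow> bool" where
  "network N L \<longleftrightarrow> finite N \<and> (\<forall>l\<in>L. \<exists>k m. l = {k, m} \<and> k \<noteq> m \<and> k \<in> N \<and> m \<in> N)"

definition is_path :: "'a set \<Rightarrow> 'a set set \<Rightarrow> 'a list \<Rightarrow> 'a \<Rightarrow> 'a \<Rightarrow> bool" where
  "is_path N L p a b \<longleftrightarrow> p \<noteq> [] \<and> hd p = a \<and> last p = b \<and> set p \<subseteq> N \<and>
     (\<forall>i. Suc i < length p \<longrightarrow> {p ! i, p ! Suc i} \<in> L)"

definition connected_network :: "'a set \<Rightarrow> 'a set set \<Rightarrow> bool" where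
  "connected_network N L \<longleftrightarrow> (\<forall>a\<in>N. \<forall>b\<in>N. \<exists>p. is_path N L p a b)"

definition Bhat :: "'a set \<Rightarrow> 'a set set \<Rightarrow> ('a set \<Rightarrow> real) \<Rightarrow> 'a \<Rightarrow> 'a \<Rightarrow> real" where
  "Bhat N L x k m =
     (if k = m then (\<Sum>l\<in>{l\<in>L. k \<in> l}. 1 / x l)
      else if {k, m} \<in> L then - 1 / x {k, m} else 0)"

definition Bmul :: "'a set \<Rightarrow> 'a set set \<Rightarrow> ('a set \<Rightarrow> real) \<Rightarrow> ('a \<Rightarrow> real) \<Rightarrow> 'a \<Rightarrow> real" where
  "Bmul N L x \<theta> k = (\<Sum>m\<in>N. Bhat N L x k m * \<theta> m)"

end

theory Submission
  imports Defs
begin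

text \<open>Put \<open>\<phi> = \<theta>' - \<theta>\<close>. By linearity \<open>\<hat>B \<phi> = \<delta>\<close>, so \<open>\<hat>B \<phi> \<ge> 0\<close> away from \<open>t\<close>
  and \<open>(\<hat>B \<phi>)\<^sub>s = \<Gamma> > 0\<close>. Since \<open>(\<hat>B \<phi>)\<^sub>v = \<Sum>\<^sub>m (\<phi>\<^sub>v - \<phi>\<^sub>m) / x\<^sub>v\<^sub>m\<close> is \<open>\<le> 0\<close> at a minimiser of \<open>\<phi>\<close>,
  with equality only if all neighbours are minimisers too, the set of minimisers spreads
  along every line leaving a bus other than \<open>t\<close>. Hence, by connectivity, \<open>t\<close> is a minimiser;
  and \<open>s\<close> is not, so no bus joined to \<open>s\<close> by a path avoiding \<open>t\<close> is one either.\<close>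

lemma is_path_singleton_iff: "is_path N L [u] a b \<longleftrightarrow> u = a \<and> u = b \<and> u \<in> N"
  by (auto simp: is_path_def)

lemma is_path_Cons_Cons_iff:
  "is_path N L (u # v # p) a b \<longleftrightarrow> u = a \<and> u \<in> N \<and> {u, v} \<in> L \<and> is_path N L (v # p) v b"
proof -
  have "(\<forall>i. Suc i < length (u # v # p) \<longrightarrow> {(u # v # p) ! i, (u # v # p) ! Suc i} \<in> L) \<longleftrightarrow>
        {u, v} \<in> L \<and> (\<forall>i. Suc i < length (v # p) \<longrightarrow> {(v # p) ! i, (v # p) ! Suc i} \<in> L)"
    by (simp add: All_less_Suc2)
  then show ?thesis
    by (auto simp: is_path_def)
qed

lemma is_path_rev:
  assumes "is_path N L p a b"
  shows "is_path N L (rev p) b a"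
proof -
  have "{rev p ! i, rev p ! Suc i} \<in> L" if "Suc i < length p" for i
  proof -
    have "Suc (length p - Suc (Suc i)) < length p" using that by simp
    with assms have "{p ! (length p - Suc (Suc i)), p ! Suc (length p - Suc (Suc i))} \<in> L"
      by (simp add: is_path_def)
    with that show ?thesis
      by (simp add: rev_nth Suc_diff_Suc insert_commute)
  qed
  with assms show ?thesis
    by (auto simp: is_path_def hd_rev last_rev)
qed

lemma is_path_closed_set:
  assumes closed: "\<And>v u. v \<in> S \<Longrightarrow> v \<noteq> t \<Longrightarrow> {v, u} \<in> L \<Longrightarrow> u \<in> N \<Longrightarrow> u \<in> S"
  shows "is_path N L p a b \<Longrightarrow> a \<in> S \<Longrightarrow> (if t \<in> set p then t \<in> S else b \<in> S)"
proof (induction p arbitrary: a)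
  case Nil
  then show ?case by (simp add: is_path_def)
next
  case (Cons u p)
  show ?case
  proof (cases p)
    case Nil
    with Cons.prems show ?thesis by (auto simp: is_path_singleton_iff)
  next
    case (Cons v p')
    with Cons.prems have u: "u = a" "{a, v} \<in> L" and path: "is_path N L p v b"
      by (auto simp: is_path_Cons_Cons_iff)
    show ?thesis
    proof (cases "a = t")
      case False
      have "v \<in> N" using path Cons by (auto simp: is_path_def)
      with closed Cons.prems(2) False u(2) have "v \<in> S" by blast
      with Cons.IH[OF path] False u(1) show ?thesis by simp
    qed (use Cons.prems u in auto)
  qed
qed

definition neighbours :: "'a set \<Rightarrow> 'a set set \<Rightarrow> 'a \<Rightarrow> 'a set" where
  "neighbours N L v = {m \<in> N. m \<noteq> v \<and> {v, m} \<in> L}"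

lemma Bmul_diff:
  "Bmul N L x (\<lambda>v. \<phi> v - \<psi> v) k = Bmul N L x \<phi> k - Bmul N L x \<psi> k"
  by (simp add: Bmul_def right_diff_distrib sum_subtractf)

lemma lines_at_eq_image_neighbours:
  assumes "network N L"
  shows "{l \<in> L. v \<in> l} = (\<lambda>m. {v, m}) ` neighbours N L v"
proof
  show "{l \<in> L. v \<in> l} \<subseteq> (\<lambda>m. {v, m}) ` neighbours N L v"
  proof
    fix l assume l: "l \<in> {l \<in> L. v \<in> l}"
    then obtain a b where ab: "l = {a, b}" "a \<noteq> b" "a \<in> N" "b \<in> N"
      using assms unfolding network_def by blast
    with l show "l \<in> (\<lambda>m. {v, m}) ` neighbours N L v"
      unfolding neighbours_def by (auto simp: insert_commute)
  qed
qed (auto simp: neighbours_def)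

lemma Bmul_eq_sum_neighbours:
  assumes net: "network N L" and v: "v \<in> N"
  shows "Bmul N L x \<phi> v = (\<Sum>m\<in>neighbours N L v. (\<phi> v - \<phi> m) / x {v, m})"
proof -
  have fin: "finite N" using net by (simp add: network_def)
  have "inj_on (\<lambda>m. {v, m}) (neighbours N L v)"
    by (auto simp: inj_on_def neighbours_def doubleton_eq_iff)
  then have diagonal: "Bhat N L x v v = (\<Sum>m\<in>neighbours N L v. 1 / x {v, m})"
    by (simp add: Bhat_def lines_at_eq_image_neighbours[OF net] sum.reindex)
  have "(\<Sum>m\<in>N - {v}. Bhat N L x v m * \<phi> m) =
        (\<Sum>m\<in>N - {v}. if {v, m} \<in> L then - \<phi> m / x {v, m} else 0)"
    by (rule sum.cong) (auto simp: Bhat_def)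
  also have "\<dots> = (\<Sum>m\<in>neighbours N L v. - \<phi> m / x {v, m})"
    using fin by (simp add: sum.inter_filter[symmetric] neighbours_def conj_ac)
  finally have off_diagonal:
    "(\<Sum>m\<in>N - {v}. Bhat N L x v m * \<phi> m) = (\<Sum>m\<in>neighbours N L v. - \<phi> m / x {v, m})" .
  have "Bmul N L x \<phi> v = Bhat N L x v v * \<phi> v + (\<Sum>m\<in>N - {v}. Bhat N L x v m * \<phi> m)"
    unfolding Bmul_def using fin v by (simp add: sum.remove)
  also have "\<dots> = (\<Sum>m\<in>neighbours N L v. (\<phi> v - \<phi> m) / x {v, m})"
    by (simp add: diagonal off_diagonal sum_distrib_right sum.distrib[symmetric]
        diff_divide_distrib)
  finally show ?thesis .
qed

lemma Bmul_nonpos_at_minimum: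
  assumes net: "network N L" and x_pos: "\<forall>l\<in>L. x l > 0"
    and v: "v \<in> N" and min: "\<forall>m\<in>N. \<phi> v \<le> \<phi> m"
  shows "Bmul N L x \<phi> v \<le> 0"
proof -
  have "(\<phi> v - \<phi> m) / x {v, m} \<le> 0" if "m \<in> neighbours N L v" for m
    using that min x_pos by (intro divide_nonpos_pos) (auto simp: neighbours_def)
  then show ?thesis
    by (simp add: Bmul_eq_sum_neighbours[OF net v] sum_nonpos)
qed

lemma minimum_spreads_to_neighbour:
  assumes net: "network N L" and x_pos: "\<forall>l\<in>L. x l > 0"
    and v: "v \<in> N" and min: "\<forall>m\<in>N. \<phi> v \<le> \<phi> m"
    and Bmul_nonneg: "Bmul N L x \<phi> v \<ge> 0"
    and line: "{v, u} \<in> L" and u: "u \<in> N"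
  shows "\<phi> u = \<phi> v"
proof (cases "u = v")
  case False
  then have nb: "u \<in> neighbours N L v" using line u by (simp add: neighbours_def)
  have fin: "finite (neighbours N L v)"
    using net by (simp add: network_def neighbours_def)
  let ?f = "\<lambda>m. (\<phi> m - \<phi> v) / x {v, m}"
  have f_nonneg: "\<forall>m\<in>neighbours N L v. ?f m \<ge> 0"
    using min x_pos by (auto simp: neighbours_def)
  have "sum ?f (neighbours N L v) = - Bmul N L x \<phi> v"
    by (simp add: Bmul_eq_sum_neighbours[OF net v] sum_negf[symmetric] minus_divide_left)
  also have "\<dots> \<le> 0" using Bmul_nonneg by simp
  finally have "sum ?f (neighbours N L v) = 0"
    using f_nonneg by (simp add: order_antisym sum_nonneg)
  then have "?f u = 0"
    using sum_nonneg_eq_0_iff[OF fin, of ?f] f_nonneg nb by simp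
  moreover have "x {v, u} > 0" using x_pos line by blast
  ultimately show ?thesis by simp
qed simp

lemma minimum_at_sink:
  assumes net: "network N L" and conn: "connected_network N L" and x_pos: "\<forall>l\<in>L. x l > 0"
    and t: "t \<in> N" and Bmul_nonneg: "\<forall>v\<in>N - {t}. Bmul N L x \<phi> v \<ge> 0"
  shows "\<forall>v\<in>N. \<phi> t \<le> \<phi> v"
proof -
  define M where "M = {v \<in> N. \<forall>m\<in>N. \<phi> v \<le> \<phi> m}"
  have fin: "finite N" using net by (simp add: network_def)
  have "Min (\<phi> ` N) \<in> \<phi> ` N" using fin t by (intro Min_in) auto
  then obtain w where w_N: "w \<in> N" and "\<phi> w = Min (\<phi> ` N)" by (metis imageE)
  with fin have w: "w \<in> M" by (auto simp: M_def)
  have closed: "u \<in> M" if "v \<in> M" "v \<noteq> t" "{v, u} \<in> L" "u \<in> N" for v u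
    using minimum_spreads_to_neighbour[OF net x_pos, where v = v and \<phi> = \<phi> and u = u]
      that Bmul_nonneg
    by (auto simp: M_def)
  obtain p where p: "is_path N L p w t"
    using conn w_N t unfolding connected_network_def by blast
  then have "t \<in> set p" by (auto simp: is_path_def)
  with is_path_closed_set[where S = M and t = t, OF closed p w] show ?thesis
    by (simp add: M_def)
qed

lemma above_minimum_along_path_avoiding_sink:
  assumes net: "network N L" and x_pos: "\<forall>l\<in>L. x l > 0"
    and Bmul_nonneg: "\<forall>v\<in>N - {t}. Bmul N L x \<phi> v \<ge> 0"
    and min_t: "\<forall>v\<in>N. \<phi> t \<le> \<phi> v"
    and source: "Bmul N L x \<phi> s > 0"
    and path: "is_path N L p s k" and avoids: "t \<notin> set p"
  shows "\<phi> t < \<phi> k"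
proof (rule ccontr)
  assume "\<not> \<phi> t < \<phi> k"
  moreover have k: "k \<in> N" using path by (auto simp: is_path_def)
  ultimately have "\<phi> k = \<phi> t" using min_t by force
  define M where "M = {v \<in> N. \<phi> v = \<phi> t}"
  have closed: "u \<in> M" if "v \<in> M" "v \<noteq> t" "{v, u} \<in> L" "u \<in> N" for v u
    using minimum_spreads_to_neighbour[OF net x_pos, where v = v and \<phi> = \<phi> and u = u]
      that Bmul_nonneg min_t
    by (auto simp: M_def)
  have "k \<in> M" using k \<open>\<phi> k = \<phi> t\<close> by (simp add: M_def)
  with is_path_closed_set[where S = M and t = t, OF closed is_path_rev[OF path]] avoids
  have "s \<in> M" by simp
  then have "Bmul N L x \<phi> s \<le> 0"
    using Bmul_nonpos_at_minimum[OF net x_pos] min_t by (simp add: M_def)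
  with source show False by simp
qed

theorem lemma1:
  fixes N :: "'a set" and L :: "'a set set" and x :: "'a set \<Rightarrow> real"
    and Pg Pd \<theta> \<theta>' :: "'a \<Rightarrow> real" and s t k :: 'a and \<Gamma> :: real
  assumes net: "network N L"
    and conn: "connected_network N L"
    and xpos: "\<forall>l\<in>L. x l > 0"
    and flow: "\<forall>j\<in>N. Bmul N L x \<theta> j = Pg j - Pd j"
    and st: "s \<in> N" "t \<in> N" "s \<noteq> t"
    and \<Gamma>: "\<Gamma> > 0"
    and flow': "\<forall>j\<in>N. Bmul N L x \<theta>' j =
        (Pg j + (if j = s then \<Gamma> else if j = t then - \<Gamma> else 0)) - Pd j"
    and k: "k \<in> N" "k \<noteq> t"
    and path: "\<exists>p. is_path N L p s k \<and> t \<notin> set p"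
  shows "\<theta>' k - \<theta>' t > \<theta> k - \<theta> t"
proof -
  define \<phi> where "\<phi> = (\<lambda>v. \<theta>' v - \<theta> v)"
  have injection: "Bmul N L x \<phi> j = (if j = s then \<Gamma> else if j = t then - \<Gamma> else 0)"
    if "j \<in> N" for j
    using that flow flow' unfolding \<phi>_def Bmul_diff by simp
  then have Bmul_nonneg: "\<forall>v\<in>N - {t}. Bmul N L x \<phi> v \<ge> 0"
    using \<Gamma> by simp
  have source: "Bmul N L x \<phi> s > 0"
    using injection st \<Gamma> by simp
  have min_t: "\<forall>v\<in>N. \<phi> t \<le> \<phi> v"
    using minimum_at_sink[OF net conn xpos st(2) Bmul_nonneg] .
  \<comment> \<open>the hypothesis \<open>k \<noteq> t\<close> is implied by the path avoiding \<open>t\<close>\<close>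
  obtain p where "is_path N L p s k" "t \<notin> set p" using path by blast
  with above_minimum_along_path_avoiding_sink[OF net xpos Bmul_nonneg min_t source]
  have "\<phi> t < \<phi> k" by blast
  then show ?thesis by (simp add: \<phi>_def)
qed

end
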